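(* Consider the multicast coalitional game with player set $\mathcal{N}=\{1,\dots,n\}$ and value function $$v(S)=\sum_{i\in S}U_i-\sum_{i\in S}\frac{\alpha_i}{R_S}-\frac{\beta+\gamma}{R_S},\qquad R_S=\min_{i\in S}R_i,$$ for nonempty $S\subseteq\mathcal{N}$, where the rates satisfy $R_1\le R_2\le\dots\le R_n$. Let $\mathbf{P}=\{P_1,\dots,P_n\}$ with $P_i=\{i\}$. If $$\frac{R_{i+1}}{R_i}\ge\frac{\alpha_{i+1}+\beta+\gamma}{\alpha_{i+1}}\quad\forall i\in\{1,\dots,n-1\},$$ then $\mathbf{P}$ is $\mathbb{D}_c$-stable.
   Context: A transmitter multicasts a file of size $X>0$ bits to users $\mathcal{N}$. User $i$ has valuation $U_i\in\mathbb{R}$, downloads at rate $R_i>0$, and consumes receive power $P_{Rx,i}>0$; the transmitter transmits at power $P_{Tx}>0$. Costs per unit energy are $a>0$ at users and $b>0$ at the transmitter; bandwidth cost per second is $w>0$. Set $\alpha_i=aP_{Rx,i}X$, $\beta=bP_{Tx}X$, $\gamma=wX$. A collection is a set $\mathbf{S}=\{S_1,\dots,S_k\}$ of mutually disjoint nonempty subsets of $\mathcal{N}$, with value $v(\mathbf{S})=\sum_{i=1}^kv(S_i)$. For a partition $\mathbf{P}=\{P_1,\dots,P_n\}$, $\mathbf{S}[\mathbf{P}]$ is the collection of the nonempty sets among $(\bigcup_{i=1}^kS_i)\cap P_1,\dots,(\bigcup_{i=1}^kS_i)\cap P_n$. A partition $\mathbf{P}$ is $\mathbb{D}_c$-stable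 if $v(\mathbf{S}[\mathbf{P}])\ge v(\mathbf{S})$ for every collection $\mathbf{S}$. The ordering $R_1\le\dots\le R_n$ is the paper's standing assumption that the coalitions of $\mathbf{P}$ are indexed in increasing order of rates. *)

theory Defs
  imports Complex_Main
begin

text \<open>Multicast coalitional game. Players are naturals; the player set is {1..n}.\<close>

definition rate_min :: "(nat \<Rightarrow> real) \<Rightarrow> nat set \<Rightarrow> real" where
  "rate_min R S = Min (R ` S)"

definition mc_value ::
  "(nat \<Rightarrow> real) \<Rightarrow> (nat \<Rightarrow> real) \<Rightarrow> (nat \<Rightarrow> real) \<Rightarrow> real \<Rightarrow> real \<Rightarrow> nat set \<Rightarrow> real" where
  "mc_value U R alpha beta gamma S =
     (\<Sum>i\<in>S. U i) - (\<Sum>i\<in>S. alpha i / rate_min R S) - (beta + gamma) / rate_min R S"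

definition is_collection :: "nat set \<Rightarrow> nat set set \<Rightarrow> bool" where
  "is_collection N SS \<longleftrightarrow>
     (\<forall>S\<in>SS. S \<noteq> {} \<and> S \<subseteq> N) \<and>
     (\<forall>S\<in>SS. \<forall>T\<in>SS. S \<noteq> T \<longrightarrow> S \<inter> T = {})"

definition coll_value :: "(nat set \<Rightarrow> real) \<Rightarrow> nat set set \<Rightarrow> real" where
  "coll_value v SS = (\<Sum>S\<in>SS. v S)"

definition coll_restrict :: "nat set set \<Rightarrow> nat set set \<Rightarrow> nat set set" where
  "coll_restrict SS PP = {(\<Union>SS) \<inter> P | P. P \<in> PP \<and> (\<Union>SS) \<inter> P \<noteq> {}}"

definition Dc_stable :: "nat set \<Rightarrow> (nat set \<Rightarrow> real) \<Rightarrow> nat set set \<Rightarrow> bool" where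
  "Dc_stable N v PP \<longleftrightarrow>
     (\<forall>SS. is_collection N SS \<longrightarrow> coll_value v (coll_restrict SS PP) \<ge> coll_value v SS)"

end

theory Submission
  imports Defs
begin

text \<open>Merging coalitions never pays. Within a coalition S with slowest member m, the chain
  condition lets every other member i be served at rate R m for no more than it would cost
  to serve i alone, while m alone absorbs the fixed transmitter and bandwidth cost.
  Hence v(S) is at most the sum of the singleton values, and summing over the members of
  any collection shows that splitting into singletons never lowers the total value.\<close>

lemma Min_image_eq_at_Min:
  fixes f :: "'a::linorder \<Rightarrow> 'b::linorder"
  assumes "finite S" "S \<noteq> {}" and mono: "\<forall>i\<in>S. \<forall>j\<in>S. i \<le> j \<longrightarrow> f i \<le> f j"
  shows "Min (f ` S) = f (Min S)"
proof (rule Min_eqI)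
  show "finite (f ` S)" using assms(1) by simp
  show "f (Min S) \<in> f ` S" using assms(1,2) by simp
  show "f (Min S) \<le> y" if "y \<in> f ` S" for y
    using that mono assms(1,2) Min_in Min_le by blast
qed

lemma sum_divide_rates_le_divide_min_rate:
  fixes R al :: "nat \<Rightarrow> real" and c :: real
  assumes S: "S \<noteq> {}" "S \<subseteq> {1..n}"
    and R_pos: "\<forall>i\<in>{1..n}. R i > 0"
    and al_nonneg: "\<forall>i\<in>{1..n}. al i \<ge> 0"
    and R_sorted: "\<forall>i\<in>{1..n}. \<forall>j\<in>{1..n}. i \<le> j \<longrightarrow> R i \<le> R j"
    and chain: "\<forall>i\<in>{1..<n}. (al (Suc i) + c) / R (Suc i) \<le> al (Suc i) / R i"
  shows "(\<Sum>i\<in>S. (al i + c) / R i) \<le> (sum al S + c) / Min (R ` S)"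
proof -
  have fin: "finite S" using S(2) finite_subset by blast
  define m where "m = Min S"
  have m_in: "m \<in> S" and m_le: "\<forall>i\<in>S. m \<le> i" using fin S(1) by (simp_all add: m_def)
  have R_min: "Min (R ` S) = R m"
    unfolding m_def using fin S R_sorted by (intro Min_image_eq_at_Min) auto
  have R_m_pos: "R m > 0" using m_in S(2) R_pos by blast
  have other: "(al i + c) / R i \<le> al i / R m" if i: "i \<in> S - {m}" for i
  proof -
    obtain j where j: "i = Suc j" "j \<in> {1..<n}" "m \<le> j"
      using i m_le S(2) m_in by (cases i) fastforce+
    have "(al i + c) / R i \<le> al i / R j" using chain j by auto
    also have "\<dots> \<le> al i / R m"
      using j i S(2) m_in al_nonneg R_pos R_m_pos R_sorted
      by (intro divide_left_mono mult_pos_pos) (auto simp: subset_iff)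
    finally show ?thesis .
  qed
  have "(\<Sum>i\<in>S. (al i + c) / R i) = (al m + c) / R m + (\<Sum>i\<in>S - {m}. (al i + c) / R i)"
    using fin m_in by (simp add: sum.remove)
  also have "\<dots> \<le> (al m + c) / R m + (\<Sum>i\<in>S - {m}. al i / R m)"
    using other by (intro add_left_mono sum_mono) auto
  also have "\<dots> = (al m + sum al (S - {m}) + c) / R m"
    by (simp add: sum_divide_distrib[symmetric] add_divide_distrib)
  also have "\<dots> = (sum al S + c) / Min (R ` S)"
    using fin m_in R_min by (simp add: sum.remove)
  finally show ?thesis .
qed

lemma mc_value_eq:
  "mc_value U R al \<beta> \<gamma> S = sum U S - (sum al S + (\<beta> + \<gamma>)) / rate_min R S"
  by (simp add: mc_value_def sum_divide_distrib add_divide_distrib)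

lemma mc_value_singleton:
  "mc_value U R al \<beta> \<gamma> {i} = U i - (al i + (\<beta> + \<gamma>)) / R i"
  by (simp add: mc_value_eq rate_min_def)

lemma mc_value_le_sum_singletons:
  fixes R al :: "nat \<Rightarrow> real"
  assumes S: "S \<noteq> {}" "S \<subseteq> {1..n}"
    and R_pos: "\<forall>i\<in>{1..n}. R i > 0"
    and al_nonneg: "\<forall>i\<in>{1..n}. al i \<ge> 0"
    and R_sorted: "\<forall>i\<in>{1..n}. \<forall>j\<in>{1..n}. i \<le> j \<longrightarrow> R i \<le> R j"
    and chain: "\<forall>i\<in>{1..<n}. (al (Suc i) + (\<beta> + \<gamma>)) / R (Suc i) \<le> al (Suc i) / R i"
  shows "mc_value U R al \<beta> \<gamma> S \<le> (\<Sum>i\<in>S. mc_value U R al \<beta> \<gamma> {i})"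
  using sum_divide_rates_le_divide_min_rate[OF S R_pos al_nonneg R_sorted chain]
  by (simp add: mc_value_eq mc_value_singleton sum_subtractf rate_min_def)

lemma coll_restrict_singletons:
  assumes "\<Union>SS \<subseteq> N"
  shows "coll_restrict SS {{i} | i. i \<in> N} = (\<lambda>i. {i}) ` \<Union>SS"
  using assms unfolding coll_restrict_def by blast

lemma Dc_stable_singletons:
  assumes N: "finite N"
    and subadd: "\<And>S. S \<noteq> {} \<Longrightarrow> S \<subseteq> N \<Longrightarrow> v S \<le> (\<Sum>i\<in>S. v {i})"
  shows "Dc_stable N v {{i} | i. i \<in> N}"
  unfolding Dc_stable_def
proof (intro allI impI)
  fix SS assume SS: "is_collection N SS"
  have members: "\<forall>S\<in>SS. S \<noteq> {} \<and> S \<subseteq> N"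
    and disjoint: "\<forall>S\<in>SS. \<forall>T\<in>SS. S \<noteq> T \<longrightarrow> S \<inter> T = {}"
    using SS unfolding is_collection_def by auto
  have fin_members: "\<forall>S\<in>SS. finite S" using members N finite_subset by blast
  have "coll_value v SS \<le> (\<Sum>S\<in>SS. \<Sum>i\<in>S. v {i})"
    unfolding coll_value_def using members subadd by (intro sum_mono) auto
  also have "\<dots> = (\<Sum>i\<in>\<Union>SS. v {i})"
    using sum.Union_disjoint[OF fin_members disjoint, of "\<lambda>i. v {i}"] by simp
  also have "\<dots> = coll_value v (coll_restrict SS {{i} | i. i \<in> N})"
    using members by (subst coll_restrict_singletons) (auto simp: coll_value_def sum.reindex)
  finally show "coll_value v (coll_restrict SS {{i} | i. i \<in> N}) \<ge> coll_value v SS" .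
qed

theorem theorem8:
  fixes n :: nat
    and U R P_Rx :: "nat \<Rightarrow> real"
    and X P_Tx a b w :: real
  assumes X_pos: "X > 0"
    and R_pos: "\<forall>i\<in>{1..n}. R i > 0"
    and PRx_pos: "\<forall>i\<in>{1..n}. P_Rx i > 0"
    and PTx_pos: "P_Tx > 0"
    and a_pos: "a > 0" and b_pos: "b > 0" and w_pos: "w > 0"
    and R_sorted: "\<forall>i\<in>{1..n}. \<forall>j\<in>{1..n}. i \<le> j \<longrightarrow> R i \<le> R j"
    and ratio: "\<forall>i\<in>{1..<n}.
        R (i+1) / R i \<ge> (a * P_Rx (i+1) * X + b * P_Tx * X + w * X) / (a * P_Rx (i+1) * X)"
  shows "Dc_stable {1..n}
           (mc_value U R (\<lambda>i. a * P_Rx i * X) (b * P_Tx * X) (w * X))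
           {{i} | i. i \<in> {1..n}}"
proof -
  define al where "al = (\<lambda>i. a * P_Rx i * X)"
  define c where "c = b * P_Tx * X + w * X"
  have al_pos: "\<forall>i\<in>{1..n}. al i > 0" using PRx_pos a_pos X_pos by (simp add: al_def)
  have chain: "\<forall>i\<in>{1..<n}. (al (Suc i) + c) / R (Suc i) \<le> al (Suc i) / R i"
  proof
    fix i assume i: "i \<in> {1..<n}"
    have "al (Suc i) > 0" "R i > 0" "R (Suc i) > 0" using al_pos R_pos i by auto
    moreover have "(al (Suc i) + c) / al (Suc i) \<le> R (Suc i) / R i"
      using ratio i by (simp add: al_def c_def add.assoc)
    ultimately show "(al (Suc i) + c) / R (Suc i) \<le> al (Suc i) / R i"
      by (simp add: divide_simps mult.commute)
  qed
  show ?thesis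
    unfolding al_def[symmetric]
    using al_pos chain R_pos R_sorted
    by (intro Dc_stable_singletons mc_value_le_sum_singletons) (auto simp: c_def less_imp_le)
qed

end
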